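(* Let $\mathbf b=(b_1,b_2)\in\mathbb N^2$ with $\gcd(b_1,b_2)=1$ and $b_1\le b_2$. Let $J\in\mathbb N$, $\mathbf s=(s_1,\dots,s_J)\in\mathbb Z^J$, and $s_0=\max_{1\le j\le J}|s_j|$. For integers $n>s_0$ define $$f_{\mathbf b,\mathbf s}(n)=\sum_{\substack{d_1,\dots,d_J\in\mathbb N,\ d_j^{b_1}\mid n-s_j\ (1\le j\le J)\\ \gcd(d_{j_1},d_{j_2})=1\ \forall\, 1\le j_1\ne j_2\le J}}\frac{\mu(d_1)\cdots\mu(d_J)}{(d_1\cdots d_J)^{b_2}}.$$ Then for $x\ge2$, $$\sum_{s_0<n\le x}f_{\mathbf b,\mathbf s}(n)=x\prod_p\Big(1-\frac{J}{p^{b_1+b_2}}\Big)+O_{\mathbf b,\mathbf s}\big(\log^J x\big),$$ where $p$ runs over all primes.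
   Context: $\mu$ denotes the Möbius function. *)

theory Defs
  imports "HOL-Analysis.Analysis" "HOL-Computational_Algebra.Computational_Algebra"
begin

definition moebius_mu :: "nat \<Rightarrow> int" where
  "moebius_mu n = (if n = 0 \<or> \<not> squarefree n then 0 else (-1) ^ card (prime_factors n))"

definition s0 :: "nat \<Rightarrow> (nat \<Rightarrow> int) \<Rightarrow> int" where
  "s0 J s = Max ((\<lambda>j. \<bar>s j\<bar>) ` {1..J})"

text \<open>Admissible tuples (d_1,...,d_J) of positive integers, encoded as functions
  nat => nat that are 1 outside {1..J}.\<close>
definition adm_tuples :: "nat \<Rightarrow> nat \<Rightarrow> (nat \<Rightarrow> int) \<Rightarrow> int \<Rightarrow> (nat \<Rightarrow> nat) set" where
  "adm_tuples b1 J s n =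
     {d. (\<forall>j\<in>{1..J}. d j > 0 \<and> int (d j ^ b1) dvd (n - s j)) \<and>
         (\<forall>j1\<in>{1..J}. \<forall>j2\<in>{1..J}. j1 \<noteq> j2 \<longrightarrow> coprime (d j1) (d j2)) \<and>
         (\<forall>j. j \<notin> {1..J} \<longrightarrow> d j = 1)}"

definition f_bs :: "nat \<Rightarrow> nat \<Rightarrow> nat \<Rightarrow> (nat \<Rightarrow> int) \<Rightarrow> int \<Rightarrow> real" where
  "f_bs b1 b2 J s n =
     (\<Sum>d\<in>adm_tuples b1 J s n.
        (\<Prod>j\<in>{1..J}. real_of_int (moebius_mu (d j))) / (\<Prod>j\<in>{1..J}. real (d j)) ^ b2)"

end

theory Submission
  imports Defs "HOL-Number_Theory.Cong"
begin

text \<open>Interchanging the order of summation turns the sum of f(n) over n \<le> x into a sum over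
  pairwise coprime tuples d of \<mu>(d_1)...\<mu>(d_J) / (d_1...d_J)^b_2 times the number of n \<le> x
  with d_j^b_1 | n - s_j for all j. By the Chinese remainder theorem these congruences are a
  single one modulo (d_1...d_J)^b_1, so the count is x / (d_1...d_J)^b_1 + O(1), and the O(1)
  errors add up to at most (\<Sum>_{k \<le> x} 1/k)^J = O(log^J x). The main term is x times a truncation
  of \<Sum>_d \<mu>(d_1)...\<mu>(d_J) / (d_1...d_J)^(b_1+b_2), whose tail beyond Y is O(1/Y). The partial
  Euler product \<Prod>_{p \<le> N} (1 - J/p^(b_1+b_2)) is exactly the sum over those tuples whose
  entries are squarefree with all prime factors \<le> N, because each such prime divides at most one
  entry; so the Euler products converge to the full series.\<close>

section \<open>Reciprocal sums\<close>

lemma sum_inverse_squares_telescope: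
  fixes Y M :: nat
  assumes "1 \<le> Y" "Y \<le> M"
  shows "(\<Sum>k\<in>{Suc Y..M}. 1 / real k ^ 2) \<le> 1 / real Y - 1 / real M"
  using assms(2)
proof (induction M rule: dec_induct)
  case (step M)
  have M: "real M > 0" using assms step.hyps by simp
  have "1 / real (Suc M) ^ 2 \<le> 1 / (real M * real (Suc M))"
    using M by (intro divide_left_mono) (auto simp: power2_eq_square)
  also have "\<dots> = 1 / real M - 1 / real (Suc M)"
    using M by (simp add: field_simps)
  finally show ?case
    using step by (simp add: atLeastAtMostSuc_conv)
qed simp

lemma sum_inverse_squares_tail:
  fixes Y M :: nat
  assumes "1 \<le> Y"
  shows "(\<Sum>k\<in>{Suc Y..M}. 1 / real k ^ 2) \<le> 1 / real Y"
proof (cases "Y \<le> M")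
  case True
  have "0 \<le> 1 / real M" by simp
  with sum_inverse_squares_telescope[OF assms True] show ?thesis by linarith
qed simp

lemma sum_inverse_squares_le_2: "(\<Sum>k\<in>{1..M}. 1 / real k ^ 2) \<le> 2"
proof (cases "1 \<le> M")
  case True
  then have "(\<Sum>k\<in>{1..M}. 1 / real k ^ 2) = 1 + (\<Sum>k\<in>{Suc 1..M}. 1 / real k ^ 2)"
    by (simp add: sum.atLeast_Suc_atMost)
  also have "\<dots> \<le> 2"
    using sum_inverse_squares_tail[of 1 M] by simp
  finally show ?thesis .
qed simp

lemma harm_le_1_plus_ln: "1 \<le> n \<Longrightarrow> harm n \<le> 1 + ln (real n)"
  using euler_mascheroni_sequence_decreasing[of 1 n] by (simp add: harm_def)

section \<open>Sums over tuples\<close>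

text \<open>Like \<open>PiE\<close>, but with default value \<open>1\<close> instead of \<open>undefined\<close> outside \<open>I\<close>; this is how
  \<open>adm_tuples\<close> encodes the tuples \<open>(d\<^sub>1, \<dots>, d\<^sub>J)\<close>.\<close>
definition Pi_one :: "'i set \<Rightarrow> ('i \<Rightarrow> 'a set) \<Rightarrow> ('i \<Rightarrow> 'a::one) set" where
  "Pi_one I A = {d. (\<forall>j\<in>I. d j \<in> A j) \<and> (\<forall>j. j \<notin> I \<longrightarrow> d j = 1)}"

lemma bij_betw_restrict_Pi_one: "bij_betw (\<lambda>d. restrict d I) (Pi_one I A) (PiE I A)"
  by (rule bij_betwI[where g = "\<lambda>h j. if j \<in> I then h j else 1"])
     (auto simp: Pi_one_def PiE_def extensional_def fun_eq_iff)

lemma finite_Pi_one: "finite I \<Longrightarrow> (\<And>j. j \<in> I \<Longrightarrow> finite (A j)) \<Longrightarrow> finite (Pi_one I A)"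
  unfolding bij_betw_finite[OF bij_betw_restrict_Pi_one] by (rule finite_PiE)

lemma sum_prod_Pi_one:
  fixes g :: "'i \<Rightarrow> 'a::one \<Rightarrow> 'b::comm_semiring_1"
  assumes "finite I" "\<And>j. j \<in> I \<Longrightarrow> finite (A j)"
  shows "(\<Sum>d\<in>Pi_one I A. \<Prod>j\<in>I. g j (d j)) = (\<Prod>j\<in>I. \<Sum>k\<in>A j. g j k)"
proof -
  have "(\<Sum>d\<in>Pi_one I A. \<Prod>j\<in>I. g j (d j)) = (\<Sum>d\<in>Pi_one I A. \<Prod>j\<in>I. g j (restrict d I j))"
    by (intro sum.cong prod.cong) auto
  also have "\<dots> = (\<Sum>h\<in>PiE I A. \<Prod>j\<in>I. g j (h j))"
    by (rule sum.reindex_bij_betw[OF bij_betw_restrict_Pi_one])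
  also have "\<dots> = (\<Prod>j\<in>I. \<Sum>k\<in>A j. g j k)"
    using assms by (intro prod_sum_PiE[symmetric])
  finally show ?thesis .
qed

text \<open>The large entry contributes at most \<open>1/Y\<close>, each other entry at most \<open>\<zeta>(2) \<le> 2\<close>.\<close>
lemma sum_prod_inverse_squares_large_entry:
  fixes F :: "(nat \<Rightarrow> nat) set" and Y J :: nat
  assumes F: "finite F" "F \<subseteq> Pi_one {1..J} (\<lambda>_. {1..})"
    and j: "j \<in> {1..J}" and large: "\<And>d. d \<in> F \<Longrightarrow> Y < d j" and Y: "1 \<le> Y"
  shows "(\<Sum>d\<in>F. \<Prod>i\<in>{1..J}. 1 / real (d i) ^ 2) \<le> 2 ^ J / real Y"
proof -
  define M where "M = Max (\<Union>d\<in>F. d ` {1..J})"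
  have le_M: "d i \<le> M" if "d \<in> F" "i \<in> {1..J}" for d i
    unfolding M_def by (intro Max_ge) (use that F(1) in blast)+
  define A where "A i = (if i = j then {Suc Y..M} else {1..M})" for i
  have "F \<subseteq> Pi_one {1..J} A"
    using F(2) le_M large by (auto simp: Pi_one_def A_def Suc_le_eq)
  then have "(\<Sum>d\<in>F. \<Prod>i\<in>{1..J}. 1 / real (d i) ^ 2) \<le> (\<Sum>d\<in>Pi_one {1..J} A. \<Prod>i\<in>{1..J}. 1 / real (d i) ^ 2)"
    by (intro sum_mono2 finite_Pi_one) (auto simp: A_def intro: prod_nonneg)
  also have "\<dots> = (\<Prod>i\<in>{1..J}. \<Sum>k\<in>A i. 1 / real k ^ 2)"
    by (rule sum_prod_Pi_one) (auto simp: A_def)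
  also have "\<dots> \<le> (\<Prod>i\<in>{1..J}. if i = j then 1 / real Y else 2)"
    using sum_inverse_squares_tail[OF Y] sum_inverse_squares_le_2
    by (intro prod_mono) (auto simp: A_def sum_nonneg)
  also have "\<dots> = 1 / real Y * 2 ^ (J - 1)"
    using j by (simp add: prod.If_cases Int_absorb1 Diff_eq[symmetric] card_Diff_singleton)
  also have "\<dots> \<le> 2 ^ J / real Y"
    by (simp add: divide_right_mono)
  finally show ?thesis .
qed

lemma sum_prod_inverse_squares_tail:
  fixes F :: "(nat \<Rightarrow> nat) set" and Y J :: nat
  assumes F: "finite F" "F \<subseteq> Pi_one {1..J} (\<lambda>_. {1..})"
    and large: "\<And>d. d \<in> F \<Longrightarrow> \<exists>j\<in>{1..J}. Y < d j" and Y: "1 \<le> Y"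
  shows "(\<Sum>d\<in>F. \<Prod>j\<in>{1..J}. 1 / real (d j) ^ 2) \<le> real J * 2 ^ J / real Y"
proof -
  define h where "h d = (\<Prod>j\<in>{1..J}. 1 / real (d j) ^ 2)" for d :: "nat \<Rightarrow> nat"
  have h_nonneg: "0 \<le> h d" for d unfolding h_def by (intro prod_nonneg) auto
  have "(\<Sum>d\<in>F. h d) \<le> (\<Sum>d\<in>F. \<Sum>j\<in>{1..J}. if Y < d j then h d else 0)"
  proof (rule sum_mono)
    fix d assume "d \<in> F"
    then obtain j where "j \<in> {1..J}" "Y < d j" using large by blast
    then show "h d \<le> (\<Sum>j\<in>{1..J}. if Y < d j then h d else 0)"
      using member_le_sum[of j "{1..J}" "\<lambda>j. if Y < d j then h d else 0"] h_nonneg by auto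
  qed
  also have "\<dots> = (\<Sum>j\<in>{1..J}. \<Sum>d\<in>{d\<in>F. Y < d j}. h d)"
    by (subst sum.swap) (simp add: sum.inter_filter F(1))
  also have "\<dots> \<le> (\<Sum>j\<in>{1..J}. 2 ^ J / real Y)"
    unfolding h_def using F Y
    by (intro sum_mono sum_prod_inverse_squares_large_entry) auto
  finally show ?thesis by (simp add: h_def)
qed

definition coprime_tuples :: "nat \<Rightarrow> (nat \<Rightarrow> nat) set" where
  "coprime_tuples J =
     {d. (\<forall>j\<in>{1..J}. d j > 0) \<and>
         (\<forall>j1\<in>{1..J}. \<forall>j2\<in>{1..J}. j1 \<noteq> j2 \<longrightarrow> coprime (d j1) (d j2)) \<and>
         (\<forall>j. j \<notin> {1..J} \<longrightarrow> d j = 1)}"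

definition bounded_tuples :: "nat \<Rightarrow> nat \<Rightarrow> (nat \<Rightarrow> nat) set" where
  "bounded_tuples J Y = {d \<in> coprime_tuples J. \<forall>j\<in>{1..J}. d j \<le> Y}"

definition smooth_squarefree_tuples :: "nat \<Rightarrow> nat \<Rightarrow> (nat \<Rightarrow> nat) set" where
  "smooth_squarefree_tuples J N =
     {d \<in> coprime_tuples J. \<forall>j\<in>{1..J}. squarefree (d j) \<and> (\<forall>p. prime p \<and> p dvd d j \<longrightarrow> p \<le> N)}"

definition tuple_mu :: "nat \<Rightarrow> (nat \<Rightarrow> nat) \<Rightarrow> real" where
  "tuple_mu J d = (\<Prod>j\<in>{1..J}. real_of_int (moebius_mu (d j)))"

definition tuple_prod :: "nat \<Rightarrow> (nat \<Rightarrow> nat) \<Rightarrow> real" where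
  "tuple_prod J d = (\<Prod>j\<in>{1..J}. real (d j))"

definition truncated_series :: "nat \<Rightarrow> nat \<Rightarrow> nat \<Rightarrow> real" where
  "truncated_series J a Y = (\<Sum>d\<in>bounded_tuples J Y. tuple_mu J d / tuple_prod J d ^ a)"

lemma coprime_tuples_subset_Pi_one: "coprime_tuples J \<subseteq> Pi_one {1..J} (\<lambda>_. {1..})"
  by (auto simp: coprime_tuples_def Pi_one_def Suc_le_eq)

lemma bounded_tuples_subset_Pi_one: "bounded_tuples J Y \<subseteq> Pi_one {1..J} (\<lambda>_. {1..Y})"
  by (auto simp: bounded_tuples_def coprime_tuples_def Pi_one_def Suc_le_eq)

lemma finite_bounded_tuples: "finite (bounded_tuples J Y)"
  by (rule finite_subset[OF bounded_tuples_subset_Pi_one finite_Pi_one]) auto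

lemma sum_bounded_tuples_prod_le:
  fixes g :: "nat \<Rightarrow> real"
  assumes "\<And>k. 0 \<le> g k"
  shows "(\<Sum>d\<in>bounded_tuples J Y. \<Prod>j\<in>{1..J}. g (d j)) \<le> (\<Sum>k\<in>{1..Y}. g k) ^ J"
proof -
  have "(\<Sum>d\<in>bounded_tuples J Y. \<Prod>j\<in>{1..J}. g (d j))
          \<le> (\<Sum>d\<in>Pi_one {1..J} (\<lambda>_. {1..Y}). \<Prod>j\<in>{1..J}. g (d j))"
    using assms by (intro sum_mono2 finite_Pi_one bounded_tuples_subset_Pi_one) (auto intro: prod_nonneg)
  also have "\<dots> = (\<Sum>k\<in>{1..Y}. g k) ^ J"
    by (subst sum_prod_Pi_one) auto
  finally show ?thesis .
qed

lemma abs_tuple_mu_le_1: "\<bar>tuple_mu J d\<bar> \<le> 1"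
  unfolding tuple_mu_def abs_prod
  by (intro prod_le_1) (auto simp: moebius_mu_def power_abs simp del: of_int_abs simp flip: of_int_abs)

lemma tuple_mu_eq_0: "j \<in> {1..J} \<Longrightarrow> \<not> squarefree (d j) \<Longrightarrow> tuple_mu J d = 0"
  unfolding tuple_mu_def by (rule prod_zero) (auto simp: moebius_mu_def)

lemma tuple_prod_ge_1: "d \<in> coprime_tuples J \<Longrightarrow> 1 \<le> tuple_prod J d"
  unfolding tuple_prod_def coprime_tuples_def by (intro prod_ge_1) (auto simp: Suc_le_eq)

lemma abs_tuple_term_le:
  assumes "d \<in> coprime_tuples J" "c \<le> a"
  shows "\<bar>tuple_mu J d / tuple_prod J d ^ a\<bar> \<le> (\<Prod>j\<in>{1..J}. 1 / real (d j) ^ c)"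
proof -
  have D: "1 \<le> tuple_prod J d" by (rule tuple_prod_ge_1[OF assms(1)])
  have "\<bar>tuple_mu J d / tuple_prod J d ^ a\<bar> = \<bar>tuple_mu J d\<bar> / tuple_prod J d ^ a"
    using D by (simp add: abs_divide)
  also have "\<dots> \<le> 1 / tuple_prod J d ^ a"
    using D abs_tuple_mu_le_1 by (intro divide_right_mono) auto
  also have "\<dots> \<le> 1 / tuple_prod J d ^ c"
    using D assms(2) by (intro divide_left_mono power_increasing mult_pos_pos) auto
  also have "\<dots> = (\<Prod>j\<in>{1..J}. 1 / real (d j) ^ c)"
    unfolding tuple_prod_def by (simp add: prod_dividef prod_power_distrib)
  finally show ?thesis .
qed

lemma abs_truncated_series_le:
  assumes "2 \<le> a"
  shows "\<bar>truncated_series J a Y\<bar> \<le> 2 ^ J"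
proof -
  have "\<bar>truncated_series J a Y\<bar> \<le> (\<Sum>d\<in>bounded_tuples J Y. \<bar>tuple_mu J d / tuple_prod J d ^ a\<bar>)"
    unfolding truncated_series_def by (rule sum_abs)
  also have "\<dots> \<le> (\<Sum>d\<in>bounded_tuples J Y. \<Prod>j\<in>{1..J}. 1 / real (d j) ^ 2)"
    using assms by (intro sum_mono abs_tuple_term_le) (auto simp: bounded_tuples_def)
  also have "\<dots> \<le> (\<Sum>k\<in>{1..Y}. 1 / real k ^ 2) ^ J"
    by (rule sum_bounded_tuples_prod_le) simp
  also have "\<dots> \<le> 2 ^ J"
    by (intro power_mono sum_inverse_squares_le_2 sum_nonneg) auto
  finally show ?thesis .
qed

section \<open>Euler products\<close>

lemma prod_prime_factors_squarefree:
  fixes n :: nat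
  assumes "squarefree n" "n \<noteq> 0"
  shows "\<Prod>(prime_factors n) = n"
proof -
  have "(\<Prod>p\<in>prime_factors n. p ^ multiplicity p n) = \<Prod>(prime_factors n)"
    using assms by (intro prod.cong) (auto simp: squarefree_factorial_semiring')
  then show ?thesis
    using prod_prime_factors[OF assms(2)] by simp
qed

lemma prime_factors_prod_primes:
  fixes S :: "nat set"
  assumes "finite S" "\<And>p. p \<in> S \<Longrightarrow> prime p"
  shows "prime_factors (\<Prod>S) = S"
proof -
  have "0 \<notin> S" using assms(2) by force
  then show ?thesis using assms prime_factors_prod[of S id] by (auto simp: prime_prime_factors)
qed

lemma squarefree_prod_primes:
  fixes S :: "nat set"
  assumes "\<And>p. p \<in> S \<Longrightarrow> prime p"
  shows "squarefree (\<Prod>S)"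
  using assms by (intro squarefree_prod_coprime) (auto intro: primes_coprime squarefree_prime)

lemma moebius_mu_prod_primes:
  fixes S :: "nat set"
  assumes "finite S" "\<And>p. p \<in> S \<Longrightarrow> prime p"
  shows "moebius_mu (\<Prod>S) = (-1) ^ card S"
proof -
  have "squarefree (\<Prod>S)"
    using assms(2) by (rule squarefree_prod_primes)
  moreover have "\<Prod>S \<noteq> 0"
    using assms by (auto dest: prime_gt_0_nat)
  ultimately show ?thesis
    using prime_factors_prod_primes[OF assms] by (simp add: moebius_mu_def)
qed

definition primes_upto :: "nat \<Rightarrow> nat set" where
  "primes_upto N = {p. prime p \<and> p \<le> N}"

lemma finite_primes_upto: "finite (primes_upto N)"
  unfolding primes_upto_def by (rule finite_subset[of _ "{..N}"]) auto

text \<open>An assignment \<open>\<sigma>\<close> sends each prime \<open>p \<le> N\<close> to the index of the entry it divides, or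
  to \<open>0\<close> if it divides no entry; this identifies assignments with \<open>N\<close>-smooth squarefree tuples.\<close>
abbreviation assignments :: "nat \<Rightarrow> nat \<Rightarrow> (nat \<Rightarrow> nat) set" where
  "assignments J N \<equiv> PiE (primes_upto N) (\<lambda>_. {0..J})"

definition tuple_of_assignment :: "nat \<Rightarrow> nat \<Rightarrow> (nat \<Rightarrow> nat) \<Rightarrow> nat \<Rightarrow> nat" where
  "tuple_of_assignment J N \<sigma> = (\<lambda>j. if j \<in> {1..J} then \<Prod>{p \<in> primes_upto N. \<sigma> p = j} else 1)"

lemma tuple_of_assignment_entry:
  "j \<in> {1..J} \<Longrightarrow> tuple_of_assignment J N \<sigma> j = \<Prod>{p \<in> primes_upto N. \<sigma> p = j}"
  by (simp add: tuple_of_assignment_def)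

lemma tuple_of_assignment_pos:
  assumes "j \<in> {1..J}"
  shows "0 < tuple_of_assignment J N \<sigma> j"
  unfolding tuple_of_assignment_entry[OF assms]
  by (intro prod_pos) (simp add: primes_upto_def prime_gt_0_nat)

lemma squarefree_tuple_of_assignment:
  assumes "j \<in> {1..J}"
  shows "squarefree (tuple_of_assignment J N \<sigma> j)"
  unfolding tuple_of_assignment_entry[OF assms]
  by (rule squarefree_prod_primes) (simp add: primes_upto_def)

lemma prime_factors_tuple_of_assignment:
  assumes "j \<in> {1..J}"
  shows "prime_factors (tuple_of_assignment J N \<sigma> j) = {p \<in> primes_upto N. \<sigma> p = j}"
  unfolding tuple_of_assignment_entry[OF assms]
  by (rule prime_factors_prod_primes) (simp_all add: finite_primes_upto primes_upto_def)

lemma tuple_of_assignment_in_smooth_squarefree_tuples: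
  "tuple_of_assignment J N \<sigma> \<in> smooth_squarefree_tuples J N"
proof -
  have coprime: "coprime (tuple_of_assignment J N \<sigma> j1) (tuple_of_assignment J N \<sigma> j2)"
    if "j1 \<in> {1..J}" "j2 \<in> {1..J}" "j1 \<noteq> j2" for j1 j2
    unfolding tuple_of_assignment_entry[OF that(1)] tuple_of_assignment_entry[OF that(2)]
    using that(3) by (intro prod_coprime_left prod_coprime_right primes_coprime)
      (auto simp: primes_upto_def)
  have smooth: "p \<le> N" if "j \<in> {1..J}" "prime p" "p dvd tuple_of_assignment J N \<sigma> j" for j p
  proof -
    have "p \<in> prime_factors (tuple_of_assignment J N \<sigma> j)"
      using that tuple_of_assignment_pos[OF that(1)] by (simp add: in_prime_factors_iff)
    then show ?thesis
      using prime_factors_tuple_of_assignment[OF that(1)] by (simp add: primes_upto_def)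
  qed
  have one: "tuple_of_assignment J N \<sigma> j = 1" if "j \<notin> {1..J}" for j
    using that unfolding tuple_of_assignment_def by auto
  show ?thesis
    unfolding smooth_squarefree_tuples_def coprime_tuples_def
    using coprime smooth one tuple_of_assignment_pos squarefree_tuple_of_assignment by blast
qed

lemma inj_on_tuple_of_assignment: "inj_on (tuple_of_assignment J N) (assignments J N)"
proof (rule inj_onI)
  fix \<sigma> \<tau> assume \<sigma>: "\<sigma> \<in> assignments J N" and \<tau>: "\<tau> \<in> assignments J N"
    and eq: "tuple_of_assignment J N \<sigma> = tuple_of_assignment J N \<tau>"
  have agree: "\<tau>' p = \<sigma>' p"
    if "\<sigma>' \<in> assignments J N" "p \<in> primes_upto N" "\<sigma>' p \<noteq> 0"
       "tuple_of_assignment J N \<sigma>' = tuple_of_assignment J N \<tau>'" for \<sigma>' \<tau>' p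
  proof -
    have j: "\<sigma>' p \<in> {1..J}" using PiE_mem[OF that(1,2)] that(3) by auto
    have "p \<in> prime_factors (tuple_of_assignment J N \<sigma>' (\<sigma>' p))"
      using that(2) by (simp add: prime_factors_tuple_of_assignment[OF j])
    then show ?thesis
      using that(4) by (simp add: prime_factors_tuple_of_assignment[OF j])
  qed
  show "\<sigma> = \<tau>"
  proof (rule ext)
    fix p show "\<sigma> p = \<tau> p"
    proof (cases "p \<in> primes_upto N")
      case True
      show ?thesis
      proof (cases "\<sigma> p = 0")
        case False
        then show ?thesis using agree[OF \<sigma> True False eq] by simp
      next
        case zero: True
        show ?thesis
        proof (rule ccontr)
          assume "\<sigma> p \<noteq> \<tau> p"
          with zero agree[OF \<tau> True _ eq[symmetric]] show False by simp
        qed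
      qed
    next
      case False
      then show ?thesis using PiE_arb[OF \<sigma> False] PiE_arb[OF \<tau> False] by simp
    qed
  qed
qed

definition assignment_of_tuple :: "nat \<Rightarrow> nat \<Rightarrow> (nat \<Rightarrow> nat) \<Rightarrow> nat \<Rightarrow> nat" where
  "assignment_of_tuple J N d = (\<lambda>p. if p \<in> primes_upto N then
      if \<exists>j\<in>{1..J}. p dvd d j then THE j. j \<in> {1..J} \<and> p dvd d j else 0 else undefined)"

lemma assignment_of_tuple_eq_iff:
  assumes d: "d \<in> coprime_tuples J" and p: "p \<in> primes_upto N" and j: "j \<in> {1..J}"
  shows "assignment_of_tuple J N d p = j \<longleftrightarrow> p dvd d j"
proof (cases "\<exists>j\<in>{1..J}. p dvd d j")
  case True
  then obtain j0 where j0: "j0 \<in> {1..J}" "p dvd d j0" by blast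
  have unique: "j' = j0" if "j' \<in> {1..J}" "p dvd d j'" for j'
  proof (rule ccontr)
    assume "j' \<noteq> j0"
    then have "coprime (d j') (d j0)"
      using d that(1) j0(1) unfolding coprime_tuples_def by blast
    then have "is_unit p"
      using that(2) j0(2) by (rule coprime_common_divisor)
    with p show False by (simp add: primes_upto_def)
  qed
  have "(THE j. j \<in> {1..J} \<and> p dvd d j) = j0"
    using j0 unique by (intro the_equality) blast+
  then have "assignment_of_tuple J N d p = j0"
    using p True by (simp add: assignment_of_tuple_def)
  then show ?thesis
    using j0 unique[OF j] by auto
next
  case False
  then show ?thesis
    using p j by (auto simp: assignment_of_tuple_def)
qed

lemma assignment_of_tuple_in_assignments:
  assumes "d \<in> coprime_tuples J"
  shows "assignment_of_tuple J N d \<in> assignments J N"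
proof (rule PiE_I)
  fix p assume p: "p \<in> primes_upto N"
  show "assignment_of_tuple J N d p \<in> {0..J}"
  proof (cases "\<exists>j\<in>{1..J}. p dvd d j")
    case True
    then obtain j where "j \<in> {1..J}" "p dvd d j" by blast
    then show ?thesis using assignment_of_tuple_eq_iff[OF assms p] by auto
  next
    case False
    then show ?thesis using p by (simp add: assignment_of_tuple_def)
  qed
qed (simp add: assignment_of_tuple_def)

lemma tuple_of_assignment_of_tuple:
  assumes d: "d \<in> smooth_squarefree_tuples J N"
  shows "tuple_of_assignment J N (assignment_of_tuple J N d) = d"
proof
  fix j
  have cop: "d \<in> coprime_tuples J"
    using d by (simp add: smooth_squarefree_tuples_def)
  show "tuple_of_assignment J N (assignment_of_tuple J N d) j = d j"
  proof (cases "j \<in> {1..J}")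
    case True
    have sqf: "squarefree (d j)" and pos: "d j \<noteq> 0"
      and smooth: "\<And>p. prime p \<Longrightarrow> p dvd d j \<Longrightarrow> p \<le> N"
      using d True by (auto simp: smooth_squarefree_tuples_def coprime_tuples_def)
    have "prime_factors (d j) = {p \<in> primes_upto N. assignment_of_tuple J N d p = j}"
    proof (intro equalityI subsetI)
      fix p assume "p \<in> prime_factors (d j)"
      then show "p \<in> {p \<in> primes_upto N. assignment_of_tuple J N d p = j}"
        using pos smooth assignment_of_tuple_eq_iff[OF cop _ True]
        by (auto simp: in_prime_factors_iff primes_upto_def)
    next
      fix p assume "p \<in> {p \<in> primes_upto N. assignment_of_tuple J N d p = j}"
      then show "p \<in> prime_factors (d j)"
        using pos assignment_of_tuple_eq_iff[OF cop _ True]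
        by (auto simp: in_prime_factors_iff primes_upto_def)
    qed
    then show ?thesis
      using prod_prime_factors_squarefree[OF sqf pos] tuple_of_assignment_entry[OF True] by simp
  next
    case False
    then show ?thesis
      using cop unfolding tuple_of_assignment_def coprime_tuples_def by auto
  qed
qed

lemma bij_betw_tuple_of_assignment:
  "bij_betw (tuple_of_assignment J N) (assignments J N) (smooth_squarefree_tuples J N)"
  unfolding bij_betw_def
proof
  show "tuple_of_assignment J N ` assignments J N = smooth_squarefree_tuples J N"
  proof (intro equalityI subsetI)
    fix d assume d: "d \<in> smooth_squarefree_tuples J N"
    then have "assignment_of_tuple J N d \<in> assignments J N"
      by (intro assignment_of_tuple_in_assignments) (simp add: smooth_squarefree_tuples_def)
    then show "d \<in> tuple_of_assignment J N ` assignments J N"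
      using tuple_of_assignment_of_tuple[OF d] by (metis image_eqI)
  qed (use tuple_of_assignment_in_smooth_squarefree_tuples in auto)
qed (rule inj_on_tuple_of_assignment)

lemma tuple_of_assignment_term:
  assumes \<sigma>: "\<sigma> \<in> assignments J N"
  shows "tuple_mu J (tuple_of_assignment J N \<sigma>) / tuple_prod J (tuple_of_assignment J N \<sigma>) ^ a
           = (\<Prod>p\<in>primes_upto N. if \<sigma> p = 0 then 1 else - 1 / real p ^ a)"
proof -
  define S where "S j = {p \<in> primes_upto N. \<sigma> p = j}" for j
  have S: "finite (S j)" "\<And>p. p \<in> S j \<Longrightarrow> prime p" for j
    using finite_primes_upto by (auto simp: S_def primes_upto_def)
  have "tuple_mu J (tuple_of_assignment J N \<sigma>) / tuple_prod J (tuple_of_assignment J N \<sigma>) ^ a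
          = (\<Prod>j\<in>{1..J}. real_of_int (moebius_mu (\<Prod>(S j))) / real (\<Prod>(S j)) ^ a)"
    by (simp add: tuple_mu_def tuple_prod_def prod_dividef prod_power_distrib
        tuple_of_assignment_entry S_def)
  also have "\<dots> = (\<Prod>j\<in>{1..J}. \<Prod>p\<in>S j. - 1 / real p ^ a)"
  proof (rule prod.cong[OF refl])
    fix j
    have "real_of_int (moebius_mu (\<Prod>(S j))) = (\<Prod>p\<in>S j. - 1)"
      by (simp add: moebius_mu_prod_primes[OF S])
    moreover have "real (\<Prod>(S j)) ^ a = (\<Prod>p\<in>S j. real p ^ a)"
      by (simp only: of_nat_prod prod_power_distrib)
    ultimately have "real_of_int (moebius_mu (\<Prod>(S j))) / real (\<Prod>(S j)) ^ a
            = (\<Prod>p\<in>S j. - 1) / (\<Prod>p\<in>S j. real p ^ a)"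
      by simp
    also have "\<dots> = (\<Prod>p\<in>S j. - 1 / real p ^ a)"
      by (rule prod_dividef[symmetric])
    finally show "real_of_int (moebius_mu (\<Prod>(S j))) / real (\<Prod>(S j)) ^ a
                    = (\<Prod>p\<in>S j. - 1 / real p ^ a)" .
  qed
  also have "\<dots> = (\<Prod>j\<in>{1..J}. \<Prod>p\<in>{p \<in> {p \<in> primes_upto N. \<sigma> p \<noteq> 0}. \<sigma> p = j}. - 1 / real p ^ a)"
    by (intro prod.cong refl) (auto simp: S_def)
  also have "\<dots> = (\<Prod>p\<in>{p \<in> primes_upto N. \<sigma> p \<noteq> 0}. - 1 / real p ^ a)"
  proof (rule prod.group)
    show "\<sigma> ` {p \<in> primes_upto N. \<sigma> p \<noteq> 0} \<subseteq> {1..J}"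
      using PiE_mem[OF \<sigma>] by fastforce
  qed (simp_all add: finite_primes_upto)
  also have "\<dots> = (\<Prod>p\<in>primes_upto N. if \<sigma> p \<noteq> 0 then - 1 / real p ^ a else 1)"
    by (rule prod.inter_filter[OF finite_primes_upto])
  also have "\<dots> = (\<Prod>p\<in>primes_upto N. if \<sigma> p = 0 then 1 else - 1 / real p ^ a)"
    by (intro prod.cong) auto
  finally show ?thesis .
qed

lemma finite_smooth_squarefree_tuples: "finite (smooth_squarefree_tuples J N)"
  using bij_betw_finite[OF bij_betw_tuple_of_assignment] finite_primes_upto by (simp add: finite_PiE)

lemma euler_product_eq_sum:
  "(\<Prod>p\<in>primes_upto N. 1 - real J / real p ^ a)
     = (\<Sum>d\<in>smooth_squarefree_tuples J N. tuple_mu J d / tuple_prod J d ^ a)"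
proof -
  have "(\<Sum>d\<in>smooth_squarefree_tuples J N. tuple_mu J d / tuple_prod J d ^ a)
          = (\<Sum>\<sigma>\<in>assignments J N. tuple_mu J (tuple_of_assignment J N \<sigma>)
                                     / tuple_prod J (tuple_of_assignment J N \<sigma>) ^ a)"
    by (rule sum.reindex_bij_betw[OF bij_betw_tuple_of_assignment, symmetric])
  also have "\<dots> = (\<Sum>\<sigma>\<in>assignments J N. \<Prod>p\<in>primes_upto N. if \<sigma> p = 0 then 1 else - 1 / real p ^ a)"
    by (intro sum.cong refl tuple_of_assignment_term)
  also have "\<dots> = (\<Prod>p\<in>primes_upto N. \<Sum>k\<in>{0..J}. if k = 0 then 1 else - 1 / real p ^ a)"
    by (rule prod_sum_PiE[symmetric]) (simp_all add: finite_primes_upto)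
  also have "\<dots> = (\<Prod>p\<in>primes_upto N. 1 - real J / real p ^ a)"
  proof (rule prod.cong[OF refl])
    fix p
    have "{0..J} = insert 0 {1..J}" by auto
    then show "(\<Sum>k\<in>{0..J}. if k = 0 then 1 else - 1 / real p ^ a) = 1 - real J / real p ^ a"
      by simp
  qed
  finally show ?thesis ..
qed

lemma truncated_series_eq_sum_smooth:
  assumes "Y \<le> N"
  shows "truncated_series J a Y
           = (\<Sum>d\<in>smooth_squarefree_tuples J N \<inter> bounded_tuples J Y. tuple_mu J d / tuple_prod J d ^ a)"
  unfolding truncated_series_def
proof (rule sum.mono_neutral_right[OF finite_bounded_tuples])
  show "\<forall>d\<in>bounded_tuples J Y - smooth_squarefree_tuples J N \<inter> bounded_tuples J Y.
          tuple_mu J d / tuple_prod J d ^ a = 0"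
  proof
    fix d assume d: "d \<in> bounded_tuples J Y - smooth_squarefree_tuples J N \<inter> bounded_tuples J Y"
    have "\<exists>j\<in>{1..J}. \<not> squarefree (d j)"
    proof (rule ccontr)
      assume "\<not> (\<exists>j\<in>{1..J}. \<not> squarefree (d j))"
      moreover have "p \<le> N" if "j \<in> {1..J}" "prime p" "p dvd d j" for j p
      proof -
        have "0 < d j" "d j \<le> Y"
          using d that(1) by (auto simp: bounded_tuples_def coprime_tuples_def)
        then show ?thesis
          using dvd_imp_le[OF that(3)] assms by linarith
      qed
      ultimately have "d \<in> smooth_squarefree_tuples J N"
        using d by (auto simp: smooth_squarefree_tuples_def bounded_tuples_def)
      with d show False by blast
    qed
    then show "tuple_mu J d / tuple_prod J d ^ a = 0"
      using tuple_mu_eq_0 by fastforce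
  qed
qed auto

lemma euler_product_minus_truncated_series:
  assumes "2 \<le> a" "1 \<le> Y" "Y \<le> N"
  shows "\<bar>(\<Prod>p\<in>primes_upto N. 1 - real J / real p ^ a) - truncated_series J a Y\<bar> \<le> real J * 2 ^ J / real Y"
proof -
  define T where "T d = tuple_mu J d / tuple_prod J d ^ a" for d
  define F where "F = smooth_squarefree_tuples J N - bounded_tuples J Y"
  have "(\<Sum>d\<in>smooth_squarefree_tuples J N. T d)
          = (\<Sum>d\<in>smooth_squarefree_tuples J N \<inter> bounded_tuples J Y. T d) + (\<Sum>d\<in>F. T d)"
    unfolding F_def by (rule sum.Int_Diff[OF finite_smooth_squarefree_tuples])
  then have "(\<Prod>p\<in>primes_upto N. 1 - real J / real p ^ a) - truncated_series J a Y = (\<Sum>d\<in>F. T d)"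
    unfolding euler_product_eq_sum truncated_series_eq_sum_smooth[OF assms(3)] T_def by simp
  also have "\<bar>\<dots>\<bar> \<le> (\<Sum>d\<in>F. \<Prod>j\<in>{1..J}. 1 / real (d j) ^ 2)"
    unfolding T_def using assms(1)
    by (intro order_trans[OF sum_abs] sum_mono abs_tuple_term_le) (auto simp: F_def smooth_squarefree_tuples_def)
  also have "\<dots> \<le> real J * 2 ^ J / real Y"
  proof (rule sum_prod_inverse_squares_tail[OF _ _ _ assms(2)])
    show "finite F" by (simp add: F_def finite_smooth_squarefree_tuples)
    show "F \<subseteq> Pi_one {1..J} (\<lambda>_. {1..})"
      using coprime_tuples_subset_Pi_one by (auto simp: F_def smooth_squarefree_tuples_def)
    show "\<exists>j\<in>{1..J}. Y < d j" if "d \<in> F" for d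
      using that by (auto simp: F_def smooth_squarefree_tuples_def bounded_tuples_def not_le)
  qed
  finally show ?thesis .
qed

lemma euler_product_limit:
  assumes "2 \<le> a"
  obtains P where "(\<lambda>N. \<Prod>p\<in>primes_upto N. 1 - real J / real p ^ a) \<longlonglongrightarrow> P"
    and "\<And>Y. 1 \<le> Y \<Longrightarrow> \<bar>truncated_series J a Y - P\<bar> \<le> real J * 2 ^ J / real Y"
proof -
  define E where "E N = (\<Prod>p\<in>primes_upto N. 1 - real J / real p ^ a)" for N
  define K where "K = real J * 2 ^ J"
  have close: "\<bar>E N - truncated_series J a Y\<bar> \<le> K / real Y" if "1 \<le> Y" "Y \<le> N" for N Y
    using euler_product_minus_truncated_series[OF assms that] by (simp add: E_def K_def)
  have "Cauchy E"
  proof (rule metric_CauchyI)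
    fix e :: real assume e: "0 < e"
    obtain Y :: nat where Y: "2 * K / e < real Y" using reals_Archimedean2 by blast
    have "0 \<le> 2 * K / e" using e by (simp add: K_def)
    then have "0 < real Y" using Y by linarith
    then have Y1: "1 \<le> Y" by simp
    have "2 * (K / real Y) < e" using Y e Y1 by (simp add: field_simps)
    show "\<exists>M. \<forall>m\<ge>M. \<forall>n\<ge>M. dist (E m) (E n) < e"
    proof (intro exI allI impI)
      fix m n assume "Y \<le> m" "Y \<le> n"
      then have "\<bar>E m - truncated_series J a Y\<bar> \<le> K / real Y" "\<bar>E n - truncated_series J a Y\<bar> \<le> K / real Y"
        using close[OF Y1] by auto
      with \<open>2 * (K / real Y) < e\<close> show "dist (E m) (E n) < e"
        by (simp add: dist_real_def)
    qed
  qed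
  then obtain P where P: "E \<longlonglongrightarrow> P"
    using Cauchy_convergent_iff convergent_def by blast
  have truncated: "\<bar>truncated_series J a Y - P\<bar> \<le> K / real Y" if Y: "1 \<le> Y" for Y
  proof -
    have "(\<lambda>N. \<bar>E N - truncated_series J a Y\<bar>) \<longlonglongrightarrow> \<bar>P - truncated_series J a Y\<bar>"
      by (intro tendsto_intros P)
    then have "\<bar>P - truncated_series J a Y\<bar> \<le> K / real Y"
      by (rule LIMSEQ_le_const2) (use close[OF Y] in auto)
    then show ?thesis by simp
  qed
  show ?thesis
    using that[of P] P truncated by (simp add: E_def[abs_def] K_def)
qed

section \<open>Counting solutions of congruences\<close>

lemma card_congruent_in_interval:
  fixes lo hi r M :: int
  assumes M: "0 < M" and lh: "lo \<le> hi"
  shows "\<bar>real (card {n\<in>{lo<..hi}. M dvd n - r}) - real_of_int (hi - lo) / real_of_int M\<bar> \<le> 1"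
proof -
  define u where "u = real_of_int (hi - r) / real_of_int M"
  define v where "v = real_of_int (lo - r) / real_of_int M"
  have Mr: "real_of_int M > 0" using M by simp
  have mult_le_iff: "real_of_int k * real_of_int M \<le> real_of_int (hi - r) \<longleftrightarrow> k \<le> \<lfloor>u\<rfloor>" for k
    unfolding u_def using Mr by (simp add: le_floor_iff pos_le_divide_eq)
  have mult_gt_iff: "real_of_int (lo - r) < real_of_int k * real_of_int M \<longleftrightarrow> \<lfloor>v\<rfloor> < k" for k
    unfolding v_def using Mr by (simp add: floor_less_iff pos_divide_less_eq)
  have eq: "{n\<in>{lo<..hi}. M dvd n - r} = (\<lambda>k. r + k * M) ` {\<lfloor>v\<rfloor><..\<lfloor>u\<rfloor>}"
  proof (intro equalityI subsetI)
    fix n assume n: "n \<in> {n\<in>{lo<..hi}. M dvd n - r}"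
    obtain k where "n - r = M * k" using n by (auto elim: dvdE)
    then have k: "n = r + k * M" by (simp add: algebra_simps)
    have "k \<le> \<lfloor>u\<rfloor>" "\<lfloor>v\<rfloor> < k"
      using n k by (simp_all flip: mult_le_iff mult_gt_iff of_int_mult)
    then show "n \<in> (\<lambda>k. r + k * M) ` {\<lfloor>v\<rfloor><..\<lfloor>u\<rfloor>}" using k by auto
  next
    fix n assume "n \<in> (\<lambda>k. r + k * M) ` {\<lfloor>v\<rfloor><..\<lfloor>u\<rfloor>}"
    then obtain k where "k \<in> {\<lfloor>v\<rfloor><..\<lfloor>u\<rfloor>}" "n = r + k * M" by blast
    then have k: "n = r + k * M" "\<lfloor>v\<rfloor> < k" "k \<le> \<lfloor>u\<rfloor>" by auto
    then have "n \<le> hi" "lo < n"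
      by (simp_all flip: mult_le_iff mult_gt_iff of_int_mult)
    then show "n \<in> {n\<in>{lo<..hi}. M dvd n - r}" using k(1) by auto
  qed
  have inj: "inj_on (\<lambda>k. r + k * M) {\<lfloor>v\<rfloor><..\<lfloor>u\<rfloor>}" using M by (auto simp: inj_on_def)
  have "\<lfloor>v\<rfloor> \<le> \<lfloor>u\<rfloor>"
    unfolding u_def v_def using Mr lh by (intro floor_mono divide_right_mono) auto
  then have card: "real (card {n\<in>{lo<..hi}. M dvd n - r}) = real_of_int \<lfloor>u\<rfloor> - real_of_int \<lfloor>v\<rfloor>"
    unfolding eq card_image[OF inj] by simp
  have "u - v = real_of_int (hi - lo) / real_of_int M"
    unfolding u_def v_def by (simp add: diff_divide_distrib)
  then show ?thesis
    unfolding card by linarith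
qed

lemma chinese_remainder_int:
  fixes m :: "'a \<Rightarrow> nat" and s :: "'a \<Rightarrow> int"
  assumes "finite I" "\<And>i. i \<in> I \<Longrightarrow> 0 < m i"
    and "\<And>i j. i \<in> I \<Longrightarrow> j \<in> I \<Longrightarrow> i \<noteq> j \<Longrightarrow> coprime (m i) (m j)"
  obtains x :: int where "\<And>i. i \<in> I \<Longrightarrow> int (m i) dvd x - s i"
proof -
  have "\<forall>i\<in>I. \<forall>j\<in>I. i \<noteq> j \<longrightarrow> coprime (m i) (m j)"
    using assms(3) by blast
  from chinese_remainder_nat[OF assms(1) this, where u = "\<lambda>i. nat (s i mod int (m i))"]
  obtain x where x: "\<forall>i\<in>I. [x = nat (s i mod int (m i))] (mod m i)" ..
  have "int (m i) dvd int x - s i" if "i \<in> I" for i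
  proof -
    have "[x = nat (s i mod int (m i))] (mod m i)"
      using x that by blast
    then have "[int x = int (nat (s i mod int (m i)))] (mod int (m i))"
      by (simp only: cong_int_iff)
    then have "[int x = s i mod int (m i)] (mod int (m i))"
      using assms(2)[OF that] by simp
    then show ?thesis
      by (simp add: cong_def cong_iff_dvd_diff[symmetric])
  qed
  then show ?thesis by (rule that)
qed

lemma chinese_remainder_dvd_iff:
  fixes m :: "'a \<Rightarrow> nat" and s :: "'a \<Rightarrow> int"
  assumes "finite I" "\<And>i. i \<in> I \<Longrightarrow> 0 < m i"
    and coprime: "\<And>i j. i \<in> I \<Longrightarrow> j \<in> I \<Longrightarrow> i \<noteq> j \<Longrightarrow> coprime (m i) (m j)"
  obtains r :: int where "\<And>n. (\<forall>i\<in>I. int (m i) dvd n - s i) \<longleftrightarrow> int (\<Prod>i\<in>I. m i) dvd n - r"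
proof -
  obtain x where x_dvd: "\<And>i. i \<in> I \<Longrightarrow> int (m i) dvd x - s i"
    using chinese_remainder_int[of I m s, OF assms(1,2) coprime] by blast
  have "(\<forall>i\<in>I. int (m i) dvd n - s i) \<longleftrightarrow> int (\<Prod>i\<in>I. m i) dvd n - x" for n
  proof
    assume n: "\<forall>i\<in>I. int (m i) dvd n - s i"
    have "[n = x] (mod int (m i))" if "i \<in> I" for i
    proof -
      have "int (m i) dvd (n - s i) - (x - s i)"
        using dvd_diff[OF bspec[OF n that] x_dvd[OF that]] .
      then show ?thesis by (simp add: cong_iff_dvd_diff)
    qed
    then have "[n = x] (mod (\<Prod>i\<in>I. int (m i)))"
      using coprime by (intro cong_cong_prod_coprime) auto
    then show "int (\<Prod>i\<in>I. m i) dvd n - x"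
      by (simp add: cong_iff_dvd_diff)
  next
    assume n: "int (\<Prod>i\<in>I. m i) dvd n - x"
    show "\<forall>i\<in>I. int (m i) dvd n - s i"
    proof
      fix i assume i: "i \<in> I"
      have "int (m i) dvd int (\<Prod>i\<in>I. m i)"
        using dvd_prodI[OF assms(1) i, of m] by (simp only: int_dvd_int_iff)
      then have "int (m i) dvd (n - x) + (x - s i)"
        using n x_dvd[OF i] by (blast intro: dvd_add dvd_trans)
      then show "int (m i) dvd n - s i" by simp
    qed
  qed
  then show ?thesis by (rule that)
qed

lemma card_solutions_tuple:
  fixes s :: "nat \<Rightarrow> int" and lo hi :: int
  assumes d: "d \<in> coprime_tuples J"
  shows "\<bar>real (card {n\<in>{lo<..hi}. \<forall>j\<in>{1..J}. int (d j ^ b) dvd n - s j})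
           - real_of_int (max 0 (hi - lo)) / tuple_prod J d ^ b\<bar> \<le> 1"
proof (cases "lo \<le> hi")
  case True
  have pos: "0 < d j ^ b" if "j \<in> {1..J}" for j
    using d that by (simp add: coprime_tuples_def)
  obtain r where r: "\<And>n. (\<forall>j\<in>{1..J}. int (d j ^ b) dvd n - s j) \<longleftrightarrow> int (\<Prod>j\<in>{1..J}. d j ^ b) dvd n - r"
    using d by (auto simp: coprime_tuples_def intro: chinese_remainder_dvd_iff[of "{1..J}" "\<lambda>j. d j ^ b" s])
  define M where "M = int (\<Prod>j\<in>{1..J}. d j ^ b)"
  have "0 < (\<Prod>j\<in>{1..J}. d j ^ b)"
    using pos by (rule prod_pos)
  then have M: "0 < M"
    unfolding M_def by (simp only: of_nat_0_less_iff)
  have "real_of_int M = tuple_prod J d ^ b"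
    unfolding M_def by (simp add: tuple_prod_def prod_power_distrib)
  moreover have "{n\<in>{lo<..hi}. \<forall>j\<in>{1..J}. int (d j ^ b) dvd n - s j} = {n\<in>{lo<..hi}. M dvd n - r}"
    by (simp only: r M_def)
  ultimately show ?thesis
    using card_congruent_in_interval[OF M True, of r] True by simp
qed simp

section \<open>The summatory function\<close>

lemma abs_le_s0: "j \<in> {1..J} \<Longrightarrow> \<bar>s j\<bar> \<le> s0 J s"
  unfolding s0_def by (rule Max_ge) auto

lemma s0_nonneg: "1 \<le> J \<Longrightarrow> 0 \<le> s0 J s"
  using abs_le_s0[of 1 J s] by simp

lemma adm_tuples_eq_bounded:
  assumes b1: "1 \<le> b1" and n: "s0 J s < n" "n \<le> X"
  shows "adm_tuples b1 J s n
           = {d \<in> bounded_tuples J (nat (X + s0 J s)). \<forall>j\<in>{1..J}. int (d j ^ b1) dvd n - s j}"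
proof (intro equalityI subsetI)
  fix d assume d: "d \<in> adm_tuples b1 J s n"
  have "d j \<le> nat (X + s0 J s)" if j: "j \<in> {1..J}" for j
  proof -
    have pos: "0 < d j" and dvd: "int (d j ^ b1) dvd n - s j"
      using d j by (auto simp: adm_tuples_def)
    have "0 < n - s j" using abs_le_s0[OF j, of s] n by linarith
    then have "int (d j ^ b1) \<le> n - s j" using dvd zdvd_imp_le by blast
    moreover have "d j \<le> d j ^ b1" using pos b1 by (intro self_le_power) auto
    ultimately show ?thesis using abs_le_s0[OF j, of s] n by linarith
  qed
  then show "d \<in> {d \<in> bounded_tuples J (nat (X + s0 J s)). \<forall>j\<in>{1..J}. int (d j ^ b1) dvd n - s j}"
    using d by (auto simp: adm_tuples_def bounded_tuples_def coprime_tuples_def)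
qed (auto simp: adm_tuples_def bounded_tuples_def coprime_tuples_def)

text \<open>Every tuple admissible for some \<open>n \<le> X\<close> has entries at most \<open>X + s\<^sub>0\<close>, so the sums
  over \<open>n\<close> and over tuples can be interchanged within a finite range.\<close>
lemma sum_f_bs_eq:
  assumes "1 \<le> b1"
  shows "(\<Sum>n\<in>{s0 J s<..X}. f_bs b1 b2 J s n)
           = (\<Sum>d\<in>bounded_tuples J (nat (X + s0 J s)). tuple_mu J d / tuple_prod J d ^ b2
                * real (card {n\<in>{s0 J s<..X}. \<forall>j\<in>{1..J}. int (d j ^ b1) dvd n - s j}))"
proof -
  define B where "B = bounded_tuples J (nat (X + s0 J s))"
  define P where "P d n \<longleftrightarrow> (\<forall>j\<in>{1..J}. int (d j ^ b1) dvd n - s j)" for d n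
  define T where "T d = tuple_mu J d / tuple_prod J d ^ b2" for d
  have "(\<Sum>n\<in>{s0 J s<..X}. f_bs b1 b2 J s n) = (\<Sum>n\<in>{s0 J s<..X}. \<Sum>d\<in>B. if P d n then T d else 0)"
  proof (rule sum.cong[OF refl])
    fix n assume "n \<in> {s0 J s<..X}"
    then have n: "s0 J s < n" "n \<le> X" by auto
    have "f_bs b1 b2 J s n = (\<Sum>d\<in>{d\<in>B. P d n}. T d)"
      unfolding f_bs_def adm_tuples_eq_bounded[OF assms n]
      by (simp add: tuple_mu_def tuple_prod_def B_def P_def T_def)
    also have "\<dots> = (\<Sum>d\<in>B. if P d n then T d else 0)"
      using finite_bounded_tuples by (simp add: B_def sum.inter_filter)
    finally show "f_bs b1 b2 J s n = (\<Sum>d\<in>B. if P d n then T d else 0)" .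
  qed
  also have "\<dots> = (\<Sum>d\<in>B. \<Sum>n\<in>{s0 J s<..X}. if P d n then T d else 0)"
    by (rule sum.swap)
  also have "\<dots> = (\<Sum>d\<in>B. T d * real (card {n\<in>{s0 J s<..X}. P d n}))"
    by (intro sum.cong refl) (simp add: sum.inter_filter[symmetric])
  finally show ?thesis by (simp add: B_def P_def T_def)
qed

lemma sum_f_bs_approx:
  fixes b1 b2 J :: nat and s :: "nat \<Rightarrow> int" and X :: int
  assumes "1 \<le> b1" "1 \<le> b2"
  defines "Y \<equiv> nat (X + s0 J s)" and "L \<equiv> real_of_int (max 0 (X - s0 J s))"
  shows "\<bar>(\<Sum>n\<in>{s0 J s<..X}. f_bs b1 b2 J s n) - L * truncated_series J (b1 + b2) Y\<bar> \<le> harm Y ^ J"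
proof -
  define cnt where "cnt d = real (card {n\<in>{s0 J s<..X}. \<forall>j\<in>{1..J}. int (d j ^ b1) dvd n - s j})" for d
  define T where "T d = tuple_mu J d / tuple_prod J d ^ b2" for d
  define R where "R d = T d * (cnt d - L / tuple_prod J d ^ b1)" for d
  have split: "T d * cnt d = L * (tuple_mu J d / tuple_prod J d ^ (b1 + b2)) + R d"
    if "d \<in> bounded_tuples J Y" for d
  proof -
    have "1 \<le> tuple_prod J d" using that tuple_prod_ge_1 by (auto simp: bounded_tuples_def)
    then show ?thesis by (simp add: R_def T_def power_add field_simps)
  qed
  have "(\<Sum>n\<in>{s0 J s<..X}. f_bs b1 b2 J s n) = (\<Sum>d\<in>bounded_tuples J Y. T d * cnt d)"
    unfolding sum_f_bs_eq[OF assms(1)] by (simp add: Y_def T_def cnt_def)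
  also have "\<dots> = L * truncated_series J (b1 + b2) Y + (\<Sum>d\<in>bounded_tuples J Y. R d)"
    by (simp add: split truncated_series_def sum.distrib sum_distrib_left)
  finally have "\<bar>(\<Sum>n\<in>{s0 J s<..X}. f_bs b1 b2 J s n) - L * truncated_series J (b1 + b2) Y\<bar>
                  = \<bar>\<Sum>d\<in>bounded_tuples J Y. R d\<bar>" by simp
  also have "\<dots> \<le> (\<Sum>d\<in>bounded_tuples J Y. \<Prod>j\<in>{1..J}. 1 / real (d j))"
  proof (rule order_trans[OF sum_abs sum_mono])
    fix d assume "d \<in> bounded_tuples J Y"
    then have d: "d \<in> coprime_tuples J" by (simp add: bounded_tuples_def)
    have "\<bar>T d\<bar> \<le> (\<Prod>j\<in>{1..J}. 1 / real (d j))"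
      using abs_tuple_term_le[OF d assms(2)] by (simp add: T_def)
    moreover have "\<bar>cnt d - L / tuple_prod J d ^ b1\<bar> \<le> 1"
      unfolding cnt_def L_def by (rule card_solutions_tuple[OF d])
    ultimately have "\<bar>T d\<bar> * \<bar>cnt d - L / tuple_prod J d ^ b1\<bar> \<le> (\<Prod>j\<in>{1..J}. 1 / real (d j)) * 1"
      by (intro mult_mono) (auto intro: prod_nonneg)
    then show "\<bar>R d\<bar> \<le> (\<Prod>j\<in>{1..J}. 1 / real (d j))"
      by (simp add: R_def abs_mult)
  qed
  also have "\<dots> \<le> harm Y ^ J"
    using sum_bounded_tuples_prod_le[of "\<lambda>k. 1 / real k" J Y] by (simp add: harm_def inverse_eq_divide)
  finally show ?thesis .
qed

lemma abs_mult_sub_mult_le: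
  fixes L x T P A B K Y :: real
  assumes "\<bar>L - x\<bar> \<le> B" "\<bar>T\<bar> \<le> A" "\<bar>T - P\<bar> \<le> K / Y"
    and "0 \<le> x" "x \<le> 2 * Y" "0 < Y" "0 \<le> K"
  shows "\<bar>L * T - x * P\<bar> \<le> B * A + 2 * K"
proof -
  have "\<bar>L - x\<bar> * \<bar>T\<bar> \<le> B * A"
    using assms(1,2) by (intro mult_mono) auto
  moreover have "x * \<bar>T - P\<bar> \<le> 2 * K"
  proof -
    have "x * \<bar>T - P\<bar> \<le> x * (K / Y)"
      using assms(3,4) by (rule mult_left_mono)
    also have "\<dots> \<le> 2 * Y * (K / Y)"
      using assms(5-7) by (intro mult_right_mono) auto
    also have "\<dots> = 2 * K"
      using assms(6) by simp
    finally show ?thesis .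
  qed
  moreover have "L * T - x * P = (L - x) * T + x * (T - P)"
    by (simp add: algebra_simps)
  ultimately show ?thesis
    using assms(4) abs_triangle_ineq[of "(L - x) * T" "x * (T - P)"] by (simp add: abs_mult)
qed

lemma sum_f_bs_error:
  fixes b1 b2 J :: nat and s :: "nat \<Rightarrow> int" and x K P :: real
  assumes b: "1 \<le> b1" "b1 \<le> b2" and J: "1 \<le> J" and x: "2 \<le> x" and K: "0 \<le> K"
    and truncated: "\<And>Y. 1 \<le> Y \<Longrightarrow> \<bar>truncated_series J (b1 + b2) Y - P\<bar> \<le> K / real Y"
  defines "S \<equiv> real_of_int (s0 J s)"
  shows "\<bar>(\<Sum>n\<in>{s0 J s<..\<lfloor>x\<rfloor>}. f_bs b1 b2 J s n) - x * P\<bar>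
           \<le> (1 + ln (x * (1 + S))) ^ J + ((S + 1) * 2 ^ J + 2 * K)"
proof -
  define X where "X = \<lfloor>x\<rfloor>"
  define Y where "Y = nat (X + s0 J s)"
  define L where "L = real_of_int (max 0 (X - s0 J s))"
  define T where "T = truncated_series J (b1 + b2) Y"
  have S: "0 \<le> S" using s0_nonneg[OF J] by (simp add: S_def)
  have X: "2 \<le> X" "real_of_int X \<le> x" "x < real_of_int X + 1"
    using x by (simp_all add: X_def le_floor_iff)
  have Y: "1 \<le> Y" "real Y = real_of_int X + S"
    using X(1) s0_nonneg[OF J, of s] by (simp_all add: Y_def S_def)
  have "\<bar>(\<Sum>n\<in>{s0 J s<..X}. f_bs b1 b2 J s n) - L * T\<bar> \<le> harm Y ^ J"
    using sum_f_bs_approx[OF b(1)] b by (simp add: Y_def L_def T_def)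
  also have "\<dots> \<le> (1 + ln (real Y)) ^ J"
    using Y(1) by (intro power_mono harm_le_1_plus_ln harm_nonneg)
  also have "\<dots> \<le> (1 + ln (x * (1 + S))) ^ J"
  proof (intro power_mono add_left_mono)
    have "real Y \<le> x * (1 + S)"
      using Y(2) X(2) S mult_left_mono[OF _ S, of 1 x] x by (simp add: algebra_simps)
    then show "ln (real Y) \<le> ln (x * (1 + S))" using Y(1) by simp
    show "0 \<le> 1 + ln (real Y)" using Y(1) by simp
  qed
  finally have approx: "\<bar>(\<Sum>n\<in>{s0 J s<..X}. f_bs b1 b2 J s n) - L * T\<bar> \<le> (1 + ln (x * (1 + S))) ^ J" .
  have "\<bar>L - x\<bar> \<le> S + 1"
    using X S by (auto simp: L_def S_def max_def)
  moreover have "\<bar>T\<bar> \<le> 2 ^ J"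
    unfolding T_def using b by (intro abs_truncated_series_le) simp
  moreover have "\<bar>T - P\<bar> \<le> K / real Y"
    using truncated[OF Y(1)] by (simp add: T_def)
  moreover have "x \<le> 2 * real Y"
    using X Y S by linarith
  ultimately have "\<bar>L * T - x * P\<bar> \<le> (S + 1) * 2 ^ J + 2 * K"
    using x Y(1) K by (intro abs_mult_sub_mult_le) auto
  with approx show ?thesis
    unfolding X_def by linarith
qed

lemma power_ln_bound:
  fixes c B :: real
  assumes c: "1 \<le> c" and B: "0 \<le> B"
  obtains C where "\<And>x. 2 \<le> x \<Longrightarrow> (1 + ln (x * c)) ^ J + B \<le> C * ln x ^ J"
proof -
  define c0 where "c0 = 1 + (1 + ln c) / ln 2"
  have "(1 + ln (x * c)) ^ J + B \<le> (c0 ^ J + B / ln 2 ^ J) * ln x ^ J" if x: "2 \<le> x" for x :: real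
  proof -
    have ln2: "0 < ln (2::real)" by simp
    have lnx: "ln 2 \<le> ln x" using x by simp
    have "1 + ln (x * c) = ln x + (1 + ln c)"
      using x c by (simp add: ln_mult)
    also have "\<dots> \<le> ln x + (1 + ln c) * (ln x / ln 2)"
    proof -
      have "1 \<le> ln x / ln 2" "0 \<le> 1 + ln c" using c ln2 lnx by simp_all
      then have "(1 + ln c) * 1 \<le> (1 + ln c) * (ln x / ln 2)" by (rule mult_left_mono)
      then show ?thesis by simp
    qed
    also have "\<dots> = c0 * ln x"
      by (simp add: c0_def field_simps)
    moreover have "0 \<le> 1 + ln (x * c)"
      using x c mult_mono[of 1 x 1 c] by simp
    ultimately have "(1 + ln (x * c)) ^ J \<le> (c0 * ln x) ^ J"
      by (intro power_mono) auto
    moreover have "B \<le> B / ln 2 ^ J * ln x ^ J"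
    proof -
      have "ln 2 ^ J \<le> ln x ^ J" using ln2 lnx by (intro power_mono) auto
      then show ?thesis using ln2 B by (simp add: field_simps mult_left_mono)
    qed
    ultimately show ?thesis
      by (simp add: power_mult_distrib algebra_simps)
  qed
  then show ?thesis by (rule that)
qed

theorem lemma2p7:
  fixes b1 b2 J :: nat and s :: "nat \<Rightarrow> int"
  assumes "b1 \<ge> 1" and "b1 \<le> b2" and "coprime b1 b2" and "J \<ge> 1"
  shows "\<exists>P C. ((\<lambda>N. \<Prod>p\<in>{p. prime p \<and> p \<le> N}. 1 - real J / real p ^ (b1 + b2)) \<longlonglongrightarrow> P) \<and>
           (\<forall>x::real. x \<ge> 2 \<longrightarrow>
              \<bar>(\<Sum>n\<in>{s0 J s <.. \<lfloor>x\<rfloor>}. f_bs b1 b2 J s n) - x * P\<bar> \<le> C * ln x ^ J)"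
proof -
  have "2 \<le> b1 + b2" using assms(1,2) by simp
  obtain P where P: "(\<lambda>N. \<Prod>p\<in>primes_upto N. 1 - real J / real p ^ (b1 + b2)) \<longlonglongrightarrow> P"
    and truncated: "\<And>Y. 1 \<le> Y \<Longrightarrow> \<bar>truncated_series J (b1 + b2) Y - P\<bar> \<le> real J * 2 ^ J / real Y"
    using euler_product_limit[OF \<open>2 \<le> b1 + b2\<close>, where J = J] by blast
  define S where "S = real_of_int (s0 J s)"
  define B where "B = (S + 1) * 2 ^ J + 2 * (real J * 2 ^ J)"
  have "0 \<le> S" using s0_nonneg[OF assms(4)] by (simp add: S_def)
  then obtain C where C: "\<And>x. 2 \<le> x \<Longrightarrow> (1 + ln (x * (1 + S))) ^ J + B \<le> C * ln x ^ J"
    using power_ln_bound[of "1 + S" B] by (auto simp: B_def)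
  have "\<bar>(\<Sum>n\<in>{s0 J s <.. \<lfloor>x\<rfloor>}. f_bs b1 b2 J s n) - x * P\<bar> \<le> C * ln x ^ J" if "2 \<le> x" for x
  proof -
    have "\<bar>(\<Sum>n\<in>{s0 J s <.. \<lfloor>x\<rfloor>}. f_bs b1 b2 J s n) - x * P\<bar> \<le> (1 + ln (x * (1 + S))) ^ J + B"
      using sum_f_bs_error[OF assms(1,2,4) that _ truncated, where s = s] by (simp add: S_def B_def)
    also have "\<dots> \<le> C * ln x ^ J"
      by (rule C[OF that])
    finally show ?thesis .
  qed
  with P show ?thesis
    unfolding primes_upto_def by blast
qed

end
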